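(* Let $0<\underline{s}<\overline{s}<1$, $p\in(0,1)$, $u,v>0$ with $u\ne v$, with $\mathcal{E}_0\neq\emptyset$, and fix $\varepsilon_0>0$ and $n\in\mathbb{N}$. Let $F_n$ be the set of $f\in F^\infty_{(\underline{s},\overline{s})}$ whose stationary set $$S_f=\{c\in C_{\varepsilon_0}: G_f(\lambda,0)=G_f(\lambda,c)=0 \text{ for some }\lambda\in\mathcal{E}_0\cap\mathcal{E}_c\}$$ has Lebesgue measure at least $\frac1n$, and let $\overline{F}_n$ be its closure in $F^\infty_{(\underline{s},\overline{s})}$ (for the $L_\infty$-norm). If $f\in\overline{F}_n$, then there exists $S\subset C_{\varepsilon_0}$ with Lebesgue measure $m(S)\ge\frac1n$ such that for every $c\in S$ the system $G_f(\lambda,0)=G_f(\lambda,c)=0$ has a solution $\lambda\in\overline{\mathcal{E}}_0\cap\overline{\mathcal{E}}_c$.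
   Context: $F^\infty_{(\underline{s},\overline{s})}=\{f\in L_\infty(\underline{s},\overline{s})\cap C^0(\underline{s},\overline{s}): \int_{\underline{s}}^{\overline{s}} f(s)\frac{1-2s}{s}ds=0,\ \int_{\underline{s}}^{\overline{s}} f=1,\ f\ge0,\ f(s)\frac{1-s}{s}\in L_\infty(\underline{s},\overline{s})\}$ with the $L_\infty$-norm topology. For $\lambda>0$, $c\in(-1,u)\cap(-v,1)$: $m(\lambda,c)=\frac{\lambda(1+c)}{\lambda(1+c)+(u-c)}$, $mm(\lambda,c)=\frac{\lambda(1-c)}{\lambda(1-c)+(v+c)}$; $\mathcal{E}_c=\{\lambda>0: m(\lambda,c),mm(\lambda,c)\in(\underline{s},\overline{s})\}$, and $\overline{\mathcal{E}}_c$ denotes its closure in $\mathbb{R}$. $C=\{c\in(-1,u)\cap(-v,1):\mathcal{E}_c\ne\emptyset\}\setminus\{0\}$, $C_{\varepsilon_0}=C\cap(-1+\varepsilon_0,u-\varepsilon_0)\cap(-v+\varepsilon_0,1-\varepsilon_0)$. For $\lambda$ with $m(\lambda,c),mm(\lambda,c)\in[\underline{s},\overline{s}]$, $G_f(\lambda,c)=p\int_{\underline{s}}^{m(\lambda,c)} f(s)\frac{1-2s}{s}ds+(1-p)\int_{mm(\lambda,c)}^{\overline{s}} f(s)\frac{1-2s}{s}ds$. *)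

theory Defs
  imports "HOL-Analysis.Analysis"
begin

text \<open>Functions f are real functions; only their values on the open interval (sl, su) matter.
  L-infinity norm of a continuous function on the open interval = its supremum.\<close>

definition linf_dist :: "real \<Rightarrow> real \<Rightarrow> (real \<Rightarrow> real) \<Rightarrow> (real \<Rightarrow> real) \<Rightarrow> real" where
  "linf_dist sl su f g = Sup ((\<lambda>s. \<bar>f s - g s\<bar>) ` {sl<..<su})"

definition Finf :: "real \<Rightarrow> real \<Rightarrow> (real \<Rightarrow> real) set" where
  "Finf sl su = {f.
     bounded (f ` {sl<..<su}) \<and> continuous_on {sl<..<su} f \<and>
     f integrable_on {sl..su} \<and> (\<lambda>s. f s * (1 - 2 * s) / s) integrable_on {sl..su} \<and>
     integral {sl..su} (\<lambda>s. f s * (1 - 2 * s) / s) = 0 \<and>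
     integral {sl..su} f = 1 \<and>
     (\<forall>s\<in>{sl<..<su}. f s \<ge> 0) \<and>
     bounded ((\<lambda>s. f s * (1 - s) / s) ` {sl<..<su})}"

definition mfun :: "real \<Rightarrow> real \<Rightarrow> real \<Rightarrow> real" where
  "mfun u lam c = lam * (1 + c) / (lam * (1 + c) + (u - c))"

definition mmfun :: "real \<Rightarrow> real \<Rightarrow> real \<Rightarrow> real" where
  "mmfun v lam c = lam * (1 - c) / (lam * (1 - c) + (v + c))"

definition Eset :: "real \<Rightarrow> real \<Rightarrow> real \<Rightarrow> real \<Rightarrow> real \<Rightarrow> real set" where
  "Eset sl su u v c = {lam. lam > 0 \<and> mfun u lam c \<in> {sl<..<su} \<and> mmfun v lam c \<in> {sl<..<su}}"

definition Cset :: "real \<Rightarrow> real \<Rightarrow> real \<Rightarrow> real \<Rightarrow> real set" where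
  "Cset sl su u v = {c. c \<in> {-1<..<u} \<inter> {-v<..<1} \<and> Eset sl su u v c \<noteq> {}} - {0}"

definition Ceps :: "real \<Rightarrow> real \<Rightarrow> real \<Rightarrow> real \<Rightarrow> real \<Rightarrow> real set" where
  "Ceps sl su u v eps0 = Cset sl su u v \<inter> {-1+eps0<..<u-eps0} \<inter> {-v+eps0<..<1-eps0}"

definition Gf :: "real \<Rightarrow> real \<Rightarrow> real \<Rightarrow> real \<Rightarrow> real \<Rightarrow> (real \<Rightarrow> real) \<Rightarrow> real \<Rightarrow> real \<Rightarrow> real" where
  "Gf sl su p u v f lam c =
     p * integral {sl..mfun u lam c} (\<lambda>s. f s * (1 - 2 * s) / s)
     + (1 - p) * integral {mmfun v lam c..su} (\<lambda>s. f s * (1 - 2 * s) / s)"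

definition stationary_set :: "real \<Rightarrow> real \<Rightarrow> real \<Rightarrow> real \<Rightarrow> real \<Rightarrow> real \<Rightarrow> (real \<Rightarrow> real) \<Rightarrow> real set" where
  "stationary_set sl su p u v eps0 f = {c \<in> Ceps sl su u v eps0.
     \<exists>lam \<in> Eset sl su u v 0 \<inter> Eset sl su u v c.
       Gf sl su p u v f lam 0 = 0 \<and> Gf sl su p u v f lam c = 0}"

definition Fn :: "real \<Rightarrow> real \<Rightarrow> real \<Rightarrow> real \<Rightarrow> real \<Rightarrow> real \<Rightarrow> nat \<Rightarrow> (real \<Rightarrow> real) set" where
  "Fn sl su p u v eps0 n = {f \<in> Finf sl su.
     stationary_set sl su p u v eps0 f \<in> sets lebesgue \<and>
     emeasure lebesgue (stationary_set sl su p u v eps0 f) \<ge> ennreal (1 / real n)}"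

definition linf_closure :: "real \<Rightarrow> real \<Rightarrow> (real \<Rightarrow> real) set \<Rightarrow> (real \<Rightarrow> real) set" where
  "linf_closure sl su A = {f \<in> Finf sl su. \<forall>e>0. \<exists>g\<in>A. linf_dist sl su f g < e}"

end

(* Approximate f in sup norm by g_k in F_n and take S to be the limsup of the stationary sets of
   the g_k; as all of them lie in (-1, 1), reverse Fatou gives m(S) >= 1/n.  For c in S, c is
   stationary for infinitely many g_k, with parameters lam_k in E_0, which is bounded; along a
   subsequence lam_k tends to some lam in both closures.  Since the weight (1 - 2s)/s is bounded
   by 1/sl, G depends Lipschitz-continuously on f in sup norm, and it is continuous in lam, so
   G_{g_k}(lam_k, .) tends to G_f(lam, .), which therefore vanishes at 0 and at c. *)
theory Submission
  imports Defs
begin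

lemma abs_diff_le_linf_dist:
  assumes "bounded (f ` {sl<..<su})" "bounded (g ` {sl<..<su})" "s \<in> {sl<..<su}"
  shows "\<bar>f s - g s\<bar> \<le> linf_dist sl su f g"
proof -
  obtain Bf where Bf: "\<forall>x\<in>{sl<..<su}. \<bar>f x\<bar> \<le> Bf"
    using assms(1) by (auto simp: bounded_real)
  obtain Bg where Bg: "\<forall>x\<in>{sl<..<su}. \<bar>g x\<bar> \<le> Bg"
    using assms(2) by (auto simp: bounded_real)
  have "bdd_above ((\<lambda>s. \<bar>f s - g s\<bar>) ` {sl<..<su})"
    using Bf Bg by (intro bdd_aboveI2[where M = "Bf + Bg"]) force
  then show ?thesis
    unfolding linf_dist_def using assms(3) by (intro cSup_upper) auto
qed

lemma linf_dist_nonneg: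
  assumes "bounded (f ` {sl<..<su})" "bounded (g ` {sl<..<su})" "sl < su"
  shows "0 \<le> linf_dist sl su f g"
  using abs_diff_le_linf_dist[OF assms(1,2), of "(sl + su) / 2"] assms(3) by auto

lemma integral_weighted_diff_le:
  assumes f: "f \<in> Finf sl su" and g: "g \<in> Finf sl su"
    and "0 < sl" "sl < su" "su < 1" "sl \<le> a" "a \<le> b" "b \<le> su"
  shows "\<bar>integral {a..b} (\<lambda>s. g s * (1 - 2 * s) / s) - integral {a..b} (\<lambda>s. f s * (1 - 2 * s) / s)\<bar>
          \<le> linf_dist sl su f g * (su - sl) / sl"
proof -
  define D where "D = linf_dist sl su f g"
  define h where "h s = g s * (1 - 2 * s) / s - f s * (1 - 2 * s) / s" for s
  have D0: "0 \<le> D"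
    unfolding D_def using f g \<open>sl < su\<close> by (intro linf_dist_nonneg) (auto simp: Finf_def)
  have "{a..b} \<subseteq> {sl..su}" using assms by auto
  then have gi: "(\<lambda>s. g s * (1 - 2 * s) / s) integrable_on {a..b}"
    and fi: "(\<lambda>s. f s * (1 - 2 * s) / s) integrable_on {a..b}"
    using f g by (auto simp: Finf_def intro: integrable_on_subinterval)
  then have "(h has_integral
      integral {a..b} (\<lambda>s. g s * (1 - 2 * s) / s) - integral {a..b} (\<lambda>s. f s * (1 - 2 * s) / s)) {a..b}"
    unfolding h_def by (intro has_integral_diff integrable_integral)
  moreover have "norm (h s) \<le> D / sl" if "s \<in> {a..b} - {a, b}" for s
  proof -
    have s: "sl < s" "s < su" using that assms by auto
    have "\<bar>g s - f s\<bar> \<le> D"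
      using abs_diff_le_linf_dist[of f sl su g s] f g s unfolding D_def by (auto simp: Finf_def)
    moreover have "\<bar>1 - 2 * s\<bar> * sl \<le> 1 * s"
      using s assms by (intro mult_mono) auto
    then have "\<bar>(1 - 2 * s) / s\<bar> \<le> 1 / sl"
      using s assms by (simp add: abs_div divide_simps)
    ultimately have "\<bar>g s - f s\<bar> * \<bar>(1 - 2 * s) / s\<bar> \<le> D * (1 / sl)"
      by (intro mult_mono) auto
    moreover have "h s = (g s - f s) * ((1 - 2 * s) / s)"
      unfolding h_def using s assms by (simp add: field_simps)
    ultimately show ?thesis by (simp add: abs_mult)
  qed
  ultimately have "norm (integral {a..b} (\<lambda>s. g s * (1 - 2 * s) / s)
      - integral {a..b} (\<lambda>s. f s * (1 - 2 * s) / s)) \<le> D / sl * (b - a)"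
    using has_integral_bound_spike_finite[of "D / sl" "{a, b}" h _ a b] D0 \<open>0 < sl\<close> \<open>a \<le> b\<close>
    by simp
  also have "\<dots> \<le> D / sl * (su - sl)"
    using D0 assms by (intro mult_left_mono) auto
  finally show ?thesis unfolding D_def by simp
qed

lemma Gf_diff_le:
  assumes "f \<in> Finf sl su" "g \<in> Finf sl su" "0 < sl" "sl < su" "su < 1" "0 \<le> p" "p \<le> 1"
    and "mfun u lam c \<in> {sl..su}" "mmfun v lam c \<in> {sl..su}"
  shows "\<bar>Gf sl su p u v g lam c - Gf sl su p u v f lam c\<bar> \<le> linf_dist sl su f g * (su - sl) / sl"
proof -
  let ?K = "linf_dist sl su f g * (su - sl) / sl"
  let ?I = "\<lambda>h a b. integral {a..b} (\<lambda>s. h s * (1 - 2 * s) / s)"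
  define X where "X = ?I g sl (mfun u lam c) - ?I f sl (mfun u lam c)"
  define Y where "Y = ?I g (mmfun v lam c) su - ?I f (mmfun v lam c) su"
  have "\<bar>X\<bar> \<le> ?K" "\<bar>Y\<bar> \<le> ?K"
    unfolding X_def Y_def using assms by (intro integral_weighted_diff_le; simp)+
  have "Gf sl su p u v g lam c - Gf sl su p u v f lam c = p * X + (1 - p) * Y"
    unfolding Gf_def X_def Y_def by (simp add: algebra_simps)
  also have "\<bar>\<dots>\<bar> \<le> p * \<bar>X\<bar> + (1 - p) * \<bar>Y\<bar>"
    using assms(6,7) by (metis abs_mult abs_of_nonneg abs_triangle_ineq diff_ge_0_iff_ge)
  also have "\<dots> \<le> p * ?K + (1 - p) * ?K"
    using \<open>\<bar>X\<bar> \<le> ?K\<close> \<open>\<bar>Y\<bar> \<le> ?K\<close> assms(6,7) by (intro add_mono mult_left_mono) auto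
  also have "\<dots> = ?K" by (simp only: distrib_right[symmetric]) simp
  finally show ?thesis .
qed

lemma
  assumes c: "-1 < c" "c < u" "-v < c" "c < 1"
    and lam: "\<And>k. lam k \<in> Eset sl su u v c" "lam \<longlonglongrightarrow> l"
  shows tendsto_mfun_Eset: "(\<lambda>k. mfun u (lam k) c) \<longlonglongrightarrow> mfun u l c"
    and mfun_limit_Eset: "mfun u l c \<in> {sl..su}"
    and tendsto_mmfun_Eset: "(\<lambda>k. mmfun v (lam k) c) \<longlonglongrightarrow> mmfun v l c"
    and mmfun_limit_Eset: "mmfun v l c \<in> {sl..su}"
proof -
  have "0 \<le> l"
    using lam(1) by (intro tendsto_lowerbound[OF lam(2)] always_eventually)
      (auto simp: Eset_def less_imp_le)
  then have "l * (1 + c) + (u - c) \<noteq> 0" "l * (1 - c) + (v + c) \<noteq> 0"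
    using c by (smt (verit) mult_nonneg_nonneg)+
  then show m: "(\<lambda>k. mfun u (lam k) c) \<longlonglongrightarrow> mfun u l c"
    and mm: "(\<lambda>k. mmfun v (lam k) c) \<longlonglongrightarrow> mmfun v l c"
    unfolding mfun_def mmfun_def by (intro tendsto_intros lam(2); simp)+
  have "mfun u (lam k) c \<in> {sl..su}" "mmfun v (lam k) c \<in> {sl..su}" for k
    using lam(1)[of k] by (auto simp: Eset_def)
  then show "mfun u l c \<in> {sl..su}" "mmfun v l c \<in> {sl..su}"
    by (intro Lim_in_closed_set[OF closed_atLeastAtMost _ _ m]
        Lim_in_closed_set[OF closed_atLeastAtMost _ _ mm] always_eventually; simp)+
qed

lemma tendsto_Gf_Eset:
  assumes f: "f \<in> Finf sl su"
    and c: "-1 < c" "c < u" "-v < c" "c < 1"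
    and lam: "\<And>k. lam k \<in> Eset sl su u v c" "lam \<longlonglongrightarrow> l"
  shows "(\<lambda>k. Gf sl su p u v f (lam k) c) \<longlonglongrightarrow> Gf sl su p u v f l c"
proof -
  have fi: "(\<lambda>s. f s * (1 - 2 * s) / s) integrable_on {sl..su}"
    using f by (simp add: Finf_def)
  have in_Icc: "mfun u (lam k) c \<in> {sl..su}" "mmfun v (lam k) c \<in> {sl..su}" for k
    using lam(1)[of k] by (auto simp: Eset_def)
  have "(\<lambda>k. integral {sl..mfun u (lam k) c} (\<lambda>s. f s * (1 - 2 * s) / s))
      \<longlonglongrightarrow> integral {sl..mfun u l c} (\<lambda>s. f s * (1 - 2 * s) / s)"
    using in_Icc by (intro continuous_on_tendsto_compose[OF indefinite_integral_continuous_1[OF fi]]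
        tendsto_mfun_Eset[OF c lam] mfun_limit_Eset[OF c lam] always_eventually) auto
  moreover have "(\<lambda>k. integral {mmfun v (lam k) c..su} (\<lambda>s. f s * (1 - 2 * s) / s))
      \<longlonglongrightarrow> integral {mmfun v l c..su} (\<lambda>s. f s * (1 - 2 * s) / s)"
    using in_Icc by (intro continuous_on_tendsto_compose[OF indefinite_integral_continuous_1'[OF fi]]
        tendsto_mmfun_Eset[OF c lam] mmfun_limit_Eset[OF c lam] always_eventually) auto
  ultimately show ?thesis
    unfolding Gf_def by (intro tendsto_intros)
qed

lemma tendsto_Gf_uniform:
  assumes f: "f \<in> Finf sl su" and g: "\<And>k. g k \<in> Finf sl su"
    and g_lim: "(\<lambda>k. linf_dist sl su f (g k)) \<longlonglongrightarrow> 0"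
    and s: "0 < sl" "sl < su" "su < 1" and p: "0 \<le> p" "p \<le> 1"
    and c: "-1 < c" "c < u" "-v < c" "c < 1"
    and lam: "\<And>k. lam k \<in> Eset sl su u v c" "lam \<longlonglongrightarrow> l"
  shows "(\<lambda>k. Gf sl su p u v (g k) (lam k) c) \<longlonglongrightarrow> Gf sl su p u v f l c"
proof -
  have "mfun u (lam k) c \<in> {sl..su}" "mmfun v (lam k) c \<in> {sl..su}" for k
    using lam(1)[of k] by (auto simp: Eset_def)
  then have bound: "norm (Gf sl su p u v (g k) (lam k) c - Gf sl su p u v f (lam k) c)
      \<le> linf_dist sl su f (g k) * (su - sl) / sl" for k
    unfolding real_norm_def by (rule Gf_diff_le[OF f g s p])
  have "(\<lambda>k. linf_dist sl su f (g k) * (su - sl) / sl) \<longlonglongrightarrow> 0"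
    by (rule tendsto_divide_zero[OF tendsto_mult_left_zero[OF g_lim]])
  then have "(\<lambda>k. Gf sl su p u v (g k) (lam k) c - Gf sl su p u v f (lam k) c) \<longlonglongrightarrow> 0"
    by (rule Lim_null_comparison[OF always_eventually[OF allI[OF bound]]])
  from tendsto_add[OF this tendsto_Gf_Eset[OF f c lam, where p = p]] show ?thesis
    by simp
qed

lemma bounded_Eset_zero:
  assumes "0 < u" "su < 1"
  shows "bounded (Eset sl su u v 0)"
proof -
  have "lam \<le> su * u / (1 - su)" if "lam \<in> Eset sl su u v 0" for lam
  proof -
    have "0 < lam" "lam / (lam + u) < su"
      using that by (auto simp: Eset_def mfun_def)
    then have "lam < su * (lam + u)"
      using assms by (simp add: pos_divide_less_eq)
    then have "lam * (1 - su) \<le> su * u"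
      by (simp add: algebra_simps)
    then show ?thesis
      using assms by (simp add: pos_le_divide_eq)
  qed
  moreover have "0 \<le> lam" if "lam \<in> Eset sl su u v 0" for lam
    using that by (simp add: Eset_def)
  ultimately have "Eset sl su u v 0 \<subseteq> {0..su * u / (1 - su)}" by auto
  from bounded_subset[OF bounded_closed_interval this] show ?thesis .
qed

lemma stationary_point_limit:
  assumes f: "f \<in> Finf sl su" and g: "\<And>k. g k \<in> Finf sl su"
    and g_lim: "(\<lambda>k. linf_dist sl su f (g k)) \<longlonglongrightarrow> 0"
    and s: "0 < sl" "sl < su" "su < 1" and p: "0 \<le> p" "p \<le> 1" and "0 < u" "0 < v"
    and c: "-1 < c" "c < u" "-v < c" "c < 1"
    and stationary: "\<And>k. \<exists>lam \<in> Eset sl su u v 0 \<inter> Eset sl su u v c.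
      Gf sl su p u v (g k) lam 0 = 0 \<and> Gf sl su p u v (g k) lam c = 0"
  shows "\<exists>lam \<in> closure (Eset sl su u v 0) \<inter> closure (Eset sl su u v c).
      Gf sl su p u v f lam 0 = 0 \<and> Gf sl su p u v f lam c = 0"
proof -
  obtain lam where lam0: "\<And>k. lam k \<in> Eset sl su u v 0" and lamc: "\<And>k. lam k \<in> Eset sl su u v c"
    and zero: "\<And>k. Gf sl su p u v (g k) (lam k) 0 = 0" "\<And>k. Gf sl su p u v (g k) (lam k) c = 0"
    using stationary by (simp add: Bex_def) metis
  have "bounded (range lam)"
    using bounded_subset[OF bounded_Eset_zero[OF \<open>0 < u\<close> \<open>su < 1\<close>]] lam0 by blast
  then obtain l r where r: "strict_mono r" and lim: "(lam \<circ> r) \<longlonglongrightarrow> l"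
    using bounded_imp_convergent_subsequence by blast
  have gr_lim: "(\<lambda>k. linf_dist sl su f ((g \<circ> r) k)) \<longlonglongrightarrow> 0"
    using LIMSEQ_subseq_LIMSEQ[OF g_lim r] by (simp add: o_def)
  have "(\<lambda>k. Gf sl su p u v ((g \<circ> r) k) ((lam \<circ> r) k) 0) \<longlonglongrightarrow> Gf sl su p u v f l 0"
    using lam0 \<open>0 < u\<close> \<open>0 < v\<close>
    by (intro tendsto_Gf_uniform[OF f _ gr_lim s p _ _ _ _ _ lim]) (simp_all add: g)
  then have "Gf sl su p u v f l 0 = 0"
    using zero(1) by (simp add: o_def LIMSEQ_const_iff)
  moreover have "(\<lambda>k. Gf sl su p u v ((g \<circ> r) k) ((lam \<circ> r) k) c) \<longlonglongrightarrow> Gf sl su p u v f l c"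
    using lamc by (intro tendsto_Gf_uniform[OF f _ gr_lim s p c _ lim]) (simp_all add: g)
  then have "Gf sl su p u v f l c = 0"
    using zero(2) by (simp add: o_def LIMSEQ_const_iff)
  moreover have "l \<in> closure (Eset sl su u v 0)" "l \<in> closure (Eset sl su u v c)"
    unfolding closure_sequential using lam0 lamc lim by (metis comp_apply)+
  ultimately show ?thesis by blast
qed

lemma linf_closure_approximating_sequence:
  assumes "f \<in> linf_closure sl su A" "A \<subseteq> Finf sl su" "sl < su"
  obtains g where "\<And>k. g k \<in> A" "(\<lambda>k. linf_dist sl su f (g k)) \<longlonglongrightarrow> 0"
proof -
  have "\<forall>k. \<exists>h\<in>A. linf_dist sl su f h < inverse (real (Suc k))"
    using assms(1) unfolding linf_closure_def by auto
  then obtain g where g: "\<And>k. g k \<in> A" "\<And>k. linf_dist sl su f (g k) < inverse (real (Suc k))"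
    by metis
  have "0 \<le> linf_dist sl su f (g k)" for k
    using assms g(1)[of k] by (intro linf_dist_nonneg) (auto simp: linf_closure_def Finf_def)
  with g(2) have "(\<lambda>k. linf_dist sl su f (g k)) \<longlonglongrightarrow> 0"
    by (intro tendsto_sandwich[OF _ _ tendsto_const LIMSEQ_inverse_real_of_nat] always_eventually)
      (auto intro: less_imp_le)
  with g(1) show ?thesis using that by blast
qed

lemma mem_limsup_obtain_subseq:
  assumes "x \<in> limsup A"
  obtains r :: "nat \<Rightarrow> nat" where "strict_mono r" "\<And>k. x \<in> A (r k)"
proof -
  have "\<exists>\<^sub>F k in sequentially. x \<in> A k"
    using assms by (simp add: mem_limsup_iff)
  then have "infinite {k. x \<in> A k}"
    unfolding frequently_cofinite[symmetric] cofinite_eq_sequentially .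
  then show ?thesis
    using that by (auto dest!: infinite_enumerate)
qed

lemma le_emeasure_limsup:
  assumes "\<And>k. A k \<in> sets M" "\<And>k. d \<le> emeasure M (A k)"
    and "\<And>k. A k \<subseteq> B" "B \<in> sets M" "emeasure M B \<noteq> \<infinity>"
  shows "d \<le> emeasure M (limsup A)"
proof -
  define T where "T N = (\<Union>k\<in>{N..}. A k)" for N
  have "d \<le> emeasure M (T N)" for N
    using assms(2)[of N] emeasure_mono[of "A N" "T N" M] assms(1) by (force simp: T_def)
  then have "d \<le> (INF N. emeasure M (T N))"
    by (rule INF_greatest)
  also have "\<dots> = emeasure M (\<Inter>N. T N)"
  proof (rule INF_emeasure_decseq')
    show "decseq T" by (auto simp: T_def decseq_def) (meson atLeast_iff order_trans)
    have "emeasure M (T 0) \<le> emeasure M B"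
      using assms(3,4) by (intro emeasure_mono) (auto simp: T_def)
    with assms(5) show "\<exists>N. emeasure M (T N) \<noteq> \<infinity>"
      by (intro exI[of _ 0]) (auto simp: top_unique)
  qed (use assms(1) in \<open>auto simp: T_def\<close>)
  also have "(\<Inter>N. T N) = limsup A"
    by (simp add: T_def limsup_INF_SUP)
  finally show ?thesis .
qed

theorem proposition7:
  fixes sl su p u v eps0 :: real and n :: nat and f :: "real \<Rightarrow> real"
  assumes "0 < sl" "sl < su" "su < 1"
    and "0 < p" "p < 1"
    and "0 < u" "0 < v" "u \<noteq> v"
    and "Eset sl su u v 0 \<noteq> {}"
    and "eps0 > 0" and "n > 0"
    and "f \<in> linf_closure sl su (Fn sl su p u v eps0 n)"
  shows "\<exists>S. S \<subseteq> Ceps sl su u v eps0 \<and> S \<in> sets lebesgue \<and>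
           emeasure lebesgue S \<ge> ennreal (1 / real n) \<and>
           (\<forall>c\<in>S. \<exists>lam \<in> closure (Eset sl su u v 0) \<inter> closure (Eset sl su u v c).
              Gf sl su p u v f lam 0 = 0 \<and> Gf sl su p u v f lam c = 0)"
proof -
  have f: "f \<in> Finf sl su" using assms(12) by (simp add: linf_closure_def)
  obtain g where gFn: "\<And>k. g k \<in> Fn sl su p u v eps0 n"
    and g_lim: "(\<lambda>k. linf_dist sl su f (g k)) \<longlonglongrightarrow> 0"
    using linf_closure_approximating_sequence[OF assms(12) _ \<open>sl < su\<close>] by (auto simp: Fn_def)
  define S where "S k = stationary_set sl su p u v eps0 (g k)" for k
  have S: "S k \<in> sets lebesgue" "ennreal (1 / real n) \<le> emeasure lebesgue (S k)"
    "S k \<subseteq> Ceps sl su u v eps0" for k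
    using gFn[of k] by (auto simp: S_def Fn_def stationary_set_def)
  have "Ceps sl su u v eps0 \<subseteq> {-1<..<1}"
    by (auto simp: Ceps_def Cset_def)
  with S(3) have "ennreal (1 / real n) \<le> emeasure lebesgue (limsup S)"
    by (intro le_emeasure_limsup[OF S(1,2), where B = "{-1<..<1}"]) auto
  moreover have "limsup S \<in> sets lebesgue"
    by (rule measurable_limsup[OF S(1)])
  moreover have "c \<in> Ceps sl su u v eps0 \<and>
      (\<exists>lam \<in> closure (Eset sl su u v 0) \<inter> closure (Eset sl su u v c).
        Gf sl su p u v f lam 0 = 0 \<and> Gf sl su p u v f lam c = 0)" if "c \<in> limsup S" for c
  proof -
    obtain r :: "nat \<Rightarrow> nat" where r: "strict_mono r" "\<And>k. c \<in> S (r k)"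
      using mem_limsup_obtain_subseq[OF \<open>c \<in> limsup S\<close>] by blast
    then have c: "c \<in> Ceps sl su u v eps0" using S(3) by blast
    have "(g \<circ> r) k \<in> Finf sl su" for k
      using gFn by (simp add: Fn_def)
    moreover have "(\<lambda>k. linf_dist sl su f ((g \<circ> r) k)) \<longlonglongrightarrow> 0"
      using LIMSEQ_subseq_LIMSEQ[OF g_lim r(1)] by (simp add: o_def)
    moreover have "0 \<le> p" "p \<le> 1"
      using assms(4,5) by auto
    moreover have "-1 < c" "c < u" "-v < c" "c < 1"
      using c by (auto simp: Ceps_def Cset_def)
    moreover have "\<exists>lam \<in> Eset sl su u v 0 \<inter> Eset sl su u v c.
        Gf sl su p u v ((g \<circ> r) k) lam 0 = 0 \<and> Gf sl su p u v ((g \<circ> r) k) lam c = 0" for k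
      using r(2)[of k] by (simp add: S_def stationary_set_def)
    ultimately have "\<exists>lam \<in> closure (Eset sl su u v 0) \<inter> closure (Eset sl su u v c).
        Gf sl su p u v f lam 0 = 0 \<and> Gf sl su p u v f lam c = 0"
      by (rule stationary_point_limit[OF f _ _ assms(1-3) _ _ assms(6,7)])
    with c show ?thesis ..
  qed
  ultimately show ?thesis
    by (intro exI[of _ "limsup S"] conjI subsetI ballI) blast+
qed

end
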